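(* Let $1\le k\le d$ be integers. There exist $d+2$ mass assignments $\mu_0,\dots,\mu_{d+1}$ on the $k$-dimensional linear subspaces of $\mathbb{R}^d$ such that for no $k$-dimensional linear subspace $L$ of $\mathbb{R}^d$ is there a pair of parallel hyperplanes of $L$ whose closed region between them contains exactly half of each of $\mu_0^L,\dots,\mu_{d+1}^L$.
   Context: A mass distribution on a $k$-dimensional space $L$ is a probability measure on $L$ absolutely continuous with respect to Lebesgue measure on $L$. A mass assignment on the $k$-dimensional linear subspaces of $\mathbb{R}^d$ is an assignment $L\mapsto \mu^L$ of a mass distribution $\mu^L$ on $L$ to every $k$-dimensional linear subspace $L$, depending continuously on $L$. *)

theory Defs
  imports "HOL-Analysis.Analysis" "HOL-Probability.Probability"
begin

definition k_subspace :: "'k::finite itself \<Rightarrow> (real^'n::finite) set \<Rightarrow> bool" where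
  "k_subspace _ L \<longleftrightarrow> subspace L \<and> dim L = CARD('k)"

text \<open>Mass distribution on L: a Borel probability measure on R^d concentrated on L and
  absolutely continuous w.r.t. Lebesgue measure on L, the latter being the image of
  Lebesgue measure on R^k under a linear isometry of R^k onto L.\<close>
definition mass_distribution :: "'k::finite itself \<Rightarrow> (real^'n::finite) set \<Rightarrow> (real^'n) measure \<Rightarrow> bool" where
  "mass_distribution _ L M \<longleftrightarrow>
     prob_space M \<and> sets M = sets borel \<and> emeasure M (- L) = 0 \<and>
     (\<forall>f :: real^'k \<Rightarrow> real^'n. linear f \<and> (\<forall>x. norm (f x) = norm x) \<and> range f = L \<longrightarrow>
         absolutely_continuous (distr lborel borel f) M)"

text \<open>The Grassmannian is topologised via orthogonal projections
  (closest_point L), measures via weak convergence (bounded continuous test functions).\<close>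
definition mass_assignment :: "'k::finite itself \<Rightarrow> ((real^'n::finite) set \<Rightarrow> (real^'n) measure) \<Rightarrow> bool" where
  "mass_assignment K \<mu> \<longleftrightarrow>
     (\<forall>L. k_subspace K L \<longrightarrow> mass_distribution K L (\<mu> L)) \<and>
     (\<forall>(Ls :: nat \<Rightarrow> (real^'n) set) L.
        (\<forall>m. k_subspace K (Ls m)) \<and> k_subspace K L \<and>
        (\<forall>x. (\<lambda>m. closest_point (Ls m) x) \<longlonglongrightarrow> closest_point L x) \<longrightarrow>
        (\<forall>g :: real^'n \<Rightarrow> real. continuous_on UNIV g \<and> bounded (range g) \<longrightarrow>
           (\<lambda>m. integral\<^sup>L (\<mu> (Ls m)) g) \<longlonglongrightarrow> integral\<^sup>L (\<mu> L) g))"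

end

theory Submission
  imports Defs
begin

text \<open>Each mass assignment is the orthogonal projection onto L of a fixed absolutely continuous
  measure on \<open>\<real>\<^sup>d\<close>. A slab of L pulls back under the projection to the slab of \<open>\<real>\<^sup>d\<close> with the
  same normal vector, so a slab of L halving all the projected measures would be a slab of
  \<open>\<real>\<^sup>d\<close> halving the original ones. Take the uniform measures on the balls of radius
  \<open>r = 1/(2d\<^sup>2)\<close> around the vertices \<open>e\<^sub>1, \<dots>, e\<^sub>d, -(1, \<dots>, 1)\<close> of a simplex containing the
  origin, and around the origin itself. Every direction w has a vertex p with
  \<open>w \<bullet> p \<ge> 2r|w|\<close>, so a slab meeting all vertex balls contains the ball around the origin and
  does not halve it.\<close>

lemma borel_measurable_linear:
  fixes f :: "'a::euclidean_space \<Rightarrow> 'b::real_normed_vector"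
  assumes "linear f"
  shows "f \<in> borel_measurable borel"
  using assms
  by (intro borel_measurable_continuous_onI linear_continuous_on linear_conv_bounded_linear[THEN iffD1])

lemma null_sets_vimage_linear_right_inverse:
  fixes g :: "'a::euclidean_space \<Rightarrow> 'b::euclidean_space" and f :: "'b \<Rightarrow> 'a"
  assumes g: "linear g" and f: "linear f" and gf: "\<And>y. g (f y) = y"
    and N: "N \<in> null_sets lborel"
  shows "g -` N \<in> null_sets lborel"
proof -
  \<comment> \<open>\<Phi> is a linear involution of 'a \<times> 'b carrying UNIV \<times> N onto g -` N \<times> UNIV.\<close>
  define \<Phi> :: "'a \<times> 'b \<Rightarrow> 'a \<times> 'b" where "\<Phi> = (\<lambda>(x, y). (x - f (g x) + f y, g x))"
  have "linear \<Phi>"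
    unfolding \<Phi>_def case_prod_beta
    using f g by (intro linearI) (auto simp: linear_add linear_diff linear_scale algebra_simps)
  have g_\<Phi>: "g (x - f (g x) + f y) = y" for x y
    using g by (simp add: linear_add linear_diff gf)
  have "\<Phi> ` (UNIV \<times> N) = g -` N \<times> (UNIV :: 'b set)"
  proof (intro equalityI subsetI)
    fix z :: "'a \<times> 'b" assume "z \<in> g -` N \<times> UNIV"
    then have "\<Phi> z \<in> UNIV \<times> N" and "\<Phi> (\<Phi> z) = z"
      by (auto simp: \<Phi>_def g_\<Phi> split: prod.splits)
    then show "z \<in> \<Phi> ` (UNIV \<times> N)" by (metis imageI)
  qed (auto simp: \<Phi>_def g_\<Phi>)
  moreover have "negligible (UNIV \<times> N)"
  proof -
    have "UNIV \<times> N \<in> null_sets (lborel \<Otimes>\<^sub>M lborel)"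
      using N by (intro lborel.times_in_null_sets2) auto
    then have "UNIV \<times> N \<in> null_sets lborel"
      by (simp only: lborel_prod)
    then show ?thesis
      unfolding negligible_iff_null_sets by (rule null_sets_completionI)
  qed
  ultimately have "negligible (g -` N \<times> (UNIV :: 'b set))"
    using \<open>linear \<Phi>\<close>
    by (metis negligible_differentiable_image_negligible linear_imp_differentiable_on order_refl)
  moreover have g_meas: "g -` N \<in> sets borel"
    using N by (intro measurable_sets_borel[OF borel_measurable_linear[OF g]]) auto
  ultimately have "g -` N \<times> (UNIV :: 'b set) \<in> null_sets (lborel \<Otimes>\<^sub>M lborel)"
    by (simp add: lborel_prod negligible_iff_null_sets null_sets_completion_iff borel_Times)
  then show ?thesis
    using g_meas lborel.emeasure_pair_measure_Times[where A="g -` N" and B="UNIV :: 'b set" and N=lborel]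
    by (auto simp: emeasure_lborel_UNIV intro!: null_setsI)
qed

lemma
  fixes L :: "'a::euclidean_space set"
  assumes "subspace L"
  shows closest_point_in_subspace: "closest_point L x \<in> L"
    and borel_measurable_closest_point_subspace: "closest_point L \<in> borel_measurable borel"
proof -
  have L: "convex L" "closed L" "L \<noteq> {}"
    using assms subspace_0 by (auto simp: subspace_imp_convex closed_subspace)
  show "closest_point L x \<in> L"
    using closest_point_in_set[OF L(2,3)] .
  show "closest_point L \<in> borel_measurable borel"
    using continuous_on_closest_point[OF L] by (rule borel_measurable_continuous_onI)
qed

lemma closest_point_subspace_orthogonal:
  fixes L :: "'a::euclidean_space set"
  assumes "subspace L" and "v \<in> L"
  shows "(x - closest_point L x) \<bullet> v = 0"
proof -
  have L: "convex L" "closed L"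
    using assms by (simp_all add: subspace_imp_convex closed_subspace)
  have "closest_point L x + v \<in> L" and "closest_point L x - v \<in> L"
    using assms closest_point_in_subspace[OF assms(1)] by (auto intro: subspace_add subspace_diff)
  from this[THEN closest_point_dot[OF L], of x] show ?thesis
    by (simp add: inner_diff_right)
qed

lemma closest_point_subspace_eqI:
  fixes L :: "'a::euclidean_space set"
  assumes L: "subspace L" and "p \<in> L" and orth: "\<And>v. v \<in> L \<Longrightarrow> (x - p) \<bullet> v = 0"
  shows "closest_point L x = p"
proof (rule closest_point_unique[symmetric])
  show "convex L" and "closed L"
    using L by (simp_all add: subspace_imp_convex closed_subspace)
  show "p \<in> L" by fact
  show "\<forall>z\<in>L. dist x p \<le> dist x z"
  proof
    fix z assume "z \<in> L"
    then have "orthogonal (x - p) (p - z)"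
      using orth L \<open>p \<in> L\<close> by (simp add: orthogonal_def subspace_diff)
    from norm_add_Pythagorean[OF this]
    have "(norm (x - z))\<^sup>2 = (norm (x - p))\<^sup>2 + (norm (p - z))\<^sup>2"
      by simp
    then show "dist x p \<le> dist x z"
      by (simp add: dist_norm power2_le_imp_le)
  qed
qed

lemma inner_closest_point_subspace:
  fixes L :: "'a::euclidean_space set"
  assumes "subspace L" and "v \<in> L"
  shows "v \<bullet> closest_point L x = v \<bullet> x"
  using closest_point_subspace_orthogonal[OF assms, of x]
  by (simp add: inner_commute inner_diff_right)

lemma inner_linear_isometry:
  assumes "linear f" and "\<And>x. norm (f x) = norm x"
  shows "f x \<bullet> f y = x \<bullet> y"
  using dot_norm[of "f x" "f y"] dot_norm[of x y] assms(2)[of "x + y"] assms(2)[of x] assms(2)[of y]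
  by (simp add: linear_add[OF assms(1)])

lemma adjoint_linear_isometry_cancel:
  fixes f :: "'a::euclidean_space \<Rightarrow> 'b::euclidean_space"
  assumes "linear f" and "\<And>x. norm (f x) = norm x"
  shows "adjoint f (f y) = y"
proof -
  have "\<forall>z. z \<bullet> adjoint f (f y) = z \<bullet> y"
    using adjoint_works[OF assms(1)] inner_linear_isometry[OF assms] by simp
  then show ?thesis by (simp add: vector_eq_ldot)
qed

lemma closest_point_range_linear_isometry:
  fixes f :: "'a::euclidean_space \<Rightarrow> 'b::euclidean_space"
  assumes f: "linear f" and "\<And>x. norm (f x) = norm x"
  shows "closest_point (range f) x = f (adjoint f x)"
proof (rule closest_point_subspace_eqI)
  show "subspace (range f)"
    using f by (simp add: linear_subspace_image)
  show "(x - f (adjoint f x)) \<bullet> v = 0" if "v \<in> range f" for v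
  proof -
    obtain u where v: "v = f u"
      using \<open>v \<in> range f\<close> by blast
    have "x \<bullet> f u = adjoint f x \<bullet> u"
      using adjoint_works[OF f, of u x] by (simp add: inner_commute)
    moreover have "f (adjoint f x) \<bullet> f u = adjoint f x \<bullet> u"
      by (rule inner_linear_isometry[OF assms])
    ultimately show ?thesis
      by (simp add: v inner_diff_left)
  qed
qed simp

lemma mass_distribution_distr_closest_point:
  fixes \<nu> :: "(real^'n::finite) measure"
  assumes \<nu>: "prob_space \<nu>" "sets \<nu> = sets borel" "absolutely_continuous lborel \<nu>"
    and L: "subspace L"
  shows "mass_distribution K L (distr \<nu> borel (closest_point L))"
  unfolding mass_distribution_def
proof (intro conjI allI impI)
  have P: "closest_point L \<in> measurable \<nu> borel"
    using borel_measurable_closest_point_subspace[OF L] measurable_cong_sets[OF \<nu>(2) refl] by blast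
  have space: "space \<nu> = UNIV"
    using sets_eq_imp_space_eq[OF \<nu>(2)] by simp
  show "prob_space (distr \<nu> borel (closest_point L))"
    using prob_space.prob_space_distr[OF \<nu>(1) P] .
  show "sets (distr \<nu> borel (closest_point L)) = sets borel"
    by simp
  have "- L \<in> sets borel"
    using L by (intro borel_comp borel_closed closed_subspace)
  moreover have "closest_point L -` (- L) = {}"
    using closest_point_in_subspace[OF L] by auto
  ultimately show "emeasure (distr \<nu> borel (closest_point L)) (- L) = 0"
    by (simp add: emeasure_distr[OF P])
  fix f :: "real^'k \<Rightarrow> real^'n"
  assume "linear f \<and> (\<forall>x. norm (f x) = norm x) \<and> range f = L"
  then have f: "linear f" and iso: "\<And>x. norm (f x) = norm x" and L_eq: "range f = L"
    by auto
  show "absolutely_continuous (distr lborel borel f) (distr \<nu> borel (closest_point L))"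
    unfolding absolutely_continuous_def
  proof
    fix A assume "A \<in> null_sets (distr lborel borel f)"
    then have A: "f -` A \<in> null_sets lborel" "A \<in> sets borel"
      using null_sets_distr_iff[of f lborel borel A] borel_measurable_linear[OF f] by auto
    have "adjoint f -` (f -` A) \<in> null_sets lborel"
      using adjoint_linear[OF f] f adjoint_linear_isometry_cancel[OF f iso] A(1)
      by (rule null_sets_vimage_linear_right_inverse)
    then have "adjoint f -` (f -` A) \<in> null_sets \<nu>"
      using \<nu>(3) unfolding absolutely_continuous_def by blast
    moreover have "closest_point L -` A \<inter> space \<nu> = adjoint f -` (f -` A)"
      using closest_point_range_linear_isometry[OF f iso] L_eq space by auto
    ultimately show "A \<in> null_sets (distr \<nu> borel (closest_point L))"
      using null_sets_distr_iff[OF P] A(2) by simp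
  qed
qed

lemma tendsto_integral_distr_closest_point:
  fixes \<nu> :: "'a::euclidean_space measure" and g :: "'a \<Rightarrow> real"
  assumes \<nu>: "finite_measure \<nu>" "sets \<nu> = sets borel"
    and L: "subspace L" "\<And>m. subspace (Ls m)"
    and lim: "\<And>x. (\<lambda>m. closest_point (Ls m) x) \<longlonglongrightarrow> closest_point L x"
    and g: "continuous_on UNIV g" "bounded (range g)"
  shows "(\<lambda>m. integral\<^sup>L (distr \<nu> borel (closest_point (Ls m))) g)
           \<longlonglongrightarrow> integral\<^sup>L (distr \<nu> borel (closest_point L)) g"
proof -
  have g_meas: "g \<in> borel_measurable borel"
    using g(1) by (rule borel_measurable_continuous_onI)
  have P: "closest_point M \<in> measurable \<nu> borel" if "subspace M" for M
    using borel_measurable_closest_point_subspace[OF that] measurable_cong_sets[OF \<nu>(2) refl]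
    by blast
  obtain B where B: "\<And>x. norm (g x) \<le> B"
    using g(2) by (auto simp: bounded_iff)
  have "(\<lambda>m. \<integral>x. g (closest_point (Ls m) x) \<partial>\<nu>) \<longlonglongrightarrow> (\<integral>x. g (closest_point L x) \<partial>\<nu>)"
  proof (rule integral_dominated_convergence[where w="\<lambda>_. B"])
    show "(\<lambda>x. g (closest_point L x)) \<in> borel_measurable \<nu>"
      using measurable_comp[OF P[OF L(1)] g_meas] by (simp add: comp_def)
    show "(\<lambda>x. g (closest_point (Ls m) x)) \<in> borel_measurable \<nu>" for m
      using measurable_comp[OF P[OF L(2)] g_meas] by (simp add: comp_def)
    show "integrable \<nu> (\<lambda>_. B)"
      using \<nu>(1) by (rule finite_measure.integrable_const)
    show "AE x in \<nu>. (\<lambda>m. g (closest_point (Ls m) x)) \<longlonglongrightarrow> g (closest_point L x)"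
      using continuous_on_tendsto_compose[OF g(1) lim] by simp
    show "AE x in \<nu>. norm (g (closest_point (Ls m) x)) \<le> B" for m
      using B by simp
  qed
  then show ?thesis
    using integral_distr[OF P[OF L(1)] g_meas] integral_distr[OF P[OF L(2)] g_meas] by simp
qed

lemma mass_assignment_distr_closest_point:
  fixes \<nu> :: "(real^'n::finite) measure"
  assumes \<nu>: "prob_space \<nu>" "sets \<nu> = sets borel" "absolutely_continuous lborel \<nu>"
  shows "mass_assignment K (\<lambda>L. distr \<nu> borel (closest_point L))"
  unfolding mass_assignment_def
proof (intro conjI allI impI)
  show "mass_distribution K L (distr \<nu> borel (closest_point L))" if "k_subspace K L" for L
    using that \<nu> by (simp add: k_subspace_def mass_distribution_distr_closest_point)
  show "(\<lambda>m. integral\<^sup>L (distr \<nu> borel (closest_point (Ls m))) g)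
          \<longlonglongrightarrow> integral\<^sup>L (distr \<nu> borel (closest_point L)) g"
    if "(\<forall>m. k_subspace K (Ls m)) \<and> k_subspace K L \<and>
          (\<forall>x. (\<lambda>m. closest_point (Ls m) x) \<longlonglongrightarrow> closest_point L x)"
      and "continuous_on UNIV g \<and> bounded (range g)"
    for Ls L and g :: "real^'n \<Rightarrow> real"
    using that prob_space.finite_measure[OF \<nu>(1)] \<nu>(2)
    by (intro tendsto_integral_distr_closest_point) (auto simp: k_subspace_def)
qed

lemma measure_distr_closest_point_slab:
  fixes \<nu> :: "'a::euclidean_space measure"
  assumes \<nu>: "sets \<nu> = sets borel" and L: "subspace L" "v \<in> L"
  shows "measure (distr \<nu> borel (closest_point L)) {x \<in> L. a \<le> v \<bullet> x \<and> v \<bullet> x \<le> b}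
           = measure \<nu> {x. a \<le> v \<bullet> x \<and> v \<bullet> x \<le> b}"
proof -
  have P: "closest_point L \<in> measurable \<nu> borel"
    using borel_measurable_closest_point_subspace[OF L(1)] measurable_cong_sets[OF \<nu> refl] by blast
  have "L \<in> sets borel"
    using L(1) by (simp add: borel_closed closed_subspace)
  moreover have "{x. a \<le> v \<bullet> x \<and> v \<bullet> x \<le> b} \<in> sets borel"
    by measurable
  ultimately have "L \<inter> {x. a \<le> v \<bullet> x \<and> v \<bullet> x \<le> b} \<in> sets borel"
    by (rule sets.Int)
  then have "{x \<in> L. a \<le> v \<bullet> x \<and> v \<bullet> x \<le> b} \<in> sets borel"
    by (simp add: Collect_conj_eq)
  moreover have "closest_point L -` {x \<in> L. a \<le> v \<bullet> x \<and> v \<bullet> x \<le> b} \<inter> space \<nu>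
                   = {x. a \<le> v \<bullet> x \<and> v \<bullet> x \<le> b}"
    using closest_point_in_subspace[OF L(1)] inner_closest_point_subspace[OF L]
      sets_eq_imp_space_eq[OF \<nu>] by auto
  ultimately show ?thesis
    by (simp add: measure_distr[OF P])
qed

lemma
  fixes c :: "'a::euclidean_space"
  assumes "r > 0"
  shows prob_space_uniform_cball: "prob_space (uniform_measure lborel (cball c r))"
    and absolutely_continuous_uniform_cball:
      "absolutely_continuous lborel (uniform_measure lborel (cball c r))"
    and measure_uniform_cball:
      "T \<in> sets borel \<Longrightarrow> measure (uniform_measure lborel (cball c r)) T
         = measure lborel (cball c r \<inter> T) / measure lborel (cball c r)"
proof -
  have fin: "emeasure lborel (cball c r) \<noteq> \<infinity>"
    using emeasure_lborel_cball_finite[of c r] by simp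
  moreover have "measure lborel (cball c r) > 0"
    using content_cball_pos[OF assms] by simp
  ultimately have pos: "emeasure lborel (cball c r) \<noteq> 0"
    by (simp add: emeasure_eq_ennreal_measure)
  show "prob_space (uniform_measure lborel (cball c r))"
    using pos fin by (rule prob_space_uniform_measure)
  show "T \<in> sets borel \<Longrightarrow> measure (uniform_measure lborel (cball c r)) T
          = measure lborel (cball c r \<inter> T) / measure lborel (cball c r)"
    using pos fin by simp
  show "absolutely_continuous lborel (uniform_measure lborel (cball c r))"
    unfolding absolutely_continuous_def
  proof
    fix A :: "'a set" assume A: "A \<in> null_sets lborel"
    then have "cball c r \<inter> A \<in> null_sets lborel"
      by (rule null_set_Int1) simp
    then have "emeasure (uniform_measure lborel (cball c r)) A = 0"
      using A by (subst emeasure_uniform_measure) auto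
    then show "A \<in> null_sets (uniform_measure lborel (cball c r))"
      using A by (intro null_setsI) auto
  qed
qed

lemma abs_inner_diff_le_cball:
  fixes v :: "'a::real_inner"
  assumes "x \<in> cball c r"
  shows "\<bar>v \<bullet> x - v \<bullet> c\<bar> \<le> r * norm v"
proof -
  have "\<bar>v \<bullet> x - v \<bullet> c\<bar> = \<bar>v \<bullet> (x - c)\<bar>"
    by (simp add: inner_diff_right)
  also have "\<dots> \<le> norm v * norm (x - c)"
    by (rule Cauchy_Schwarz_ineq2)
  also have "\<dots> \<le> norm v * r"
    using assms by (intro mult_left_mono) (auto simp: dist_norm norm_minus_commute)
  finally show ?thesis
    by (simp add: mult.commute)
qed

lemma cball_0_subset_slab_if_meets_cballs:
  fixes C :: "'a::real_inner set"
  assumes surround: "\<And>w. \<exists>c\<in>C. 2 * r * norm w \<le> w \<bullet> c"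
    and meets: "\<And>c. c \<in> C \<Longrightarrow> cball c r \<inter> {x. a \<le> v \<bullet> x \<and> v \<bullet> x \<le> b} \<noteq> {}"
  shows "cball 0 r \<subseteq> {x. a \<le> v \<bullet> x \<and> v \<bullet> x \<le> b}"
proof -
  have slab_reaches: "\<exists>x. a \<le> v \<bullet> x \<and> v \<bullet> x \<le> b \<and> r * norm v \<le> w \<bullet> x"
    if "w = v \<or> w = - v" for w
  proof -
    obtain c where "c \<in> C" and c: "2 * r * norm w \<le> w \<bullet> c"
      using surround by blast
    with meets obtain x where x: "x \<in> cball c r" "a \<le> v \<bullet> x" "v \<bullet> x \<le> b"
      by blast
    have "norm w = norm v"
      using that by auto
    then show ?thesis
      using abs_inner_diff_le_cball[OF x(1), of w] c x(2,3) by (intro exI[of _ x]) auto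
  qed
  have "r * norm v \<le> b" and "a \<le> - (r * norm v)"
    using slab_reaches[of v] slab_reaches[of "- v"] by force+
  then show ?thesis
    using abs_inner_diff_le_cball[of _ 0 r v] by force
qed

lemma not_slab_halves_uniform_cballs:
  fixes C :: "'a::euclidean_space set"
  assumes "r > 0" and surround: "\<And>w. \<exists>c\<in>C. 2 * r * norm w \<le> w \<bullet> c"
  shows "\<not> (\<forall>c\<in>insert 0 C.
              measure (uniform_measure lborel (cball c r)) {x. a \<le> v \<bullet> x \<and> v \<bullet> x \<le> b} = 1 / 2)"
proof
  define S where "S = {x :: 'a. a \<le> v \<bullet> x \<and> v \<bullet> x \<le> b}"
  have S: "S \<in> sets borel"
    unfolding S_def by measurable
  assume "\<forall>c\<in>insert 0 C. measure (uniform_measure lborel (cball c r)) {x. a \<le> v \<bullet> x \<and> v \<bullet> x \<le> b} = 1 / 2"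
  then have half: "\<forall>c\<in>insert 0 C. measure lborel (cball c r \<inter> S) / measure lborel (cball c r) = 1 / 2"
    unfolding S_def[symmetric] measure_uniform_cball[OF \<open>r > 0\<close> S] .
  have "cball 0 r \<subseteq> S"
    unfolding S_def
  proof (rule cball_0_subset_slab_if_meets_cballs[OF surround])
    show "cball c r \<inter> {x. a \<le> v \<bullet> x \<and> v \<bullet> x \<le> b} \<noteq> {}" if "c \<in> C" for c
    proof
      assume "cball c r \<inter> {x. a \<le> v \<bullet> x \<and> v \<bullet> x \<le> b} = {}"
      moreover have "measure lborel (cball c r \<inter> S) / measure lborel (cball c r) = 1 / 2"
        using half that by blast
      ultimately show False
        by (simp add: S_def)
    qed
  qed
  then have "measure lborel (cball 0 r \<inter> S) / measure lborel (cball (0 :: 'a) r) = 1"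
    using content_cball_pos[OF \<open>r > 0\<close>] by (simp add: Int_absorb2)
  moreover have "measure lborel (cball 0 r \<inter> S) / measure lborel (cball (0 :: 'a) r) = 1 / 2"
    using half by blast
  ultimately show False
    by simp
qed

lemma exists_simplex_vertex_inner_ge:
  fixes w :: "real^'n::finite"
  shows "\<exists>p \<in> insert (- 1) (range (\<lambda>i. axis i 1)). norm w / real CARD('n)^2 \<le> w \<bullet> p"
proof (rule ccontr)
  define d where "d = real CARD('n)"
  define t where "t = norm w / d^2"
  have "d \<ge> 1" "t \<ge> 0"
    by (simp_all add: d_def t_def)
  assume "\<not> ?thesis"
  then have below: "w $ i < t" for i
    by (auto simp: d_def t_def inner_axis not_le)
  from \<open>\<not> ?thesis\<close> have sum_above: "- t < sum (($) w) UNIV"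
    by (auto simp: d_def t_def inner_vec_def sum_negf not_le)
  have bound: "\<bar>w $ i\<bar> < d * t" for i
  proof -
    have "sum (($) w) UNIV = w $ i + sum (($) w) (UNIV - {i})"
      by (simp add: sum.remove)
    also have "\<dots> \<le> w $ i + (d - 1) * t"
      using sum_mono[of "UNIV - {i}" "($) w" "\<lambda>_. t"] below
      by (simp add: d_def card_Diff_singleton less_imp_le of_nat_diff)
    finally have "- (d * t) < w $ i"
      using sum_above by (simp add: algebra_simps)
    moreover have "w $ i < d * t"
      using below[of i] mult_right_mono[OF \<open>d \<ge> 1\<close> \<open>t \<ge> 0\<close>] by simp
    ultimately show ?thesis
      by simp
  qed
  have "norm w \<le> (\<Sum>i\<in>UNIV. \<bar>w $ i\<bar>)"
    by (rule norm_le_l1_cart)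
  also have "\<dots> < (\<Sum>i\<in>(UNIV :: 'n set). d * t)"
    using bound by (intro sum_strict_mono) auto
  also have "\<dots> = norm w"
    using \<open>d \<ge> 1\<close> by (simp add: d_def t_def power2_eq_square)
  finally show False
    by simp
qed

lemma enumerate_simplex_vertices_and_origin:
  obtains centre :: "nat \<Rightarrow> real^'n::finite"
  where "centre ` {..CARD('n)} = insert (- 1) (range (\<lambda>i. axis i 1))"
    and "centre (CARD('n) + 1) = 0"
proof -
  obtain h :: "nat \<Rightarrow> 'n" where h: "h ` {..<CARD('n)} = UNIV"
    using ex_bij_betw_nat_finite[of "UNIV :: 'n set"] by (auto simp: bij_betw_def atLeast0LessThan)
  define centre :: "nat \<Rightarrow> real^'n" where
    "centre j = (if j < CARD('n) then axis (h j) 1 else if j = CARD('n) then - 1 else 0)" for j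
  have "centre ` {..<CARD('n)} = (\<lambda>i. axis i 1) ` h ` {..<CARD('n)}"
    unfolding image_image by (rule image_cong) (simp_all add: centre_def)
  moreover have "centre (CARD('n)) = - 1"
    by (simp add: centre_def)
  ultimately have "centre ` {..CARD('n)} = insert (- 1) (range (\<lambda>i. axis i 1))"
    using h by (simp add: lessThan_Suc_atMost[symmetric] lessThan_Suc)
  moreover have "centre (CARD('n) + 1) = 0"
    by (simp add: centre_def)
  ultimately show ?thesis
    by (rule that)
qed

theorem mainTheorem6:
  assumes "CARD('k::finite) \<le> CARD('n::finite)"
  shows "\<exists>\<mu> :: nat \<Rightarrow> (real^'n) set \<Rightarrow> (real^'n) measure.
           (\<forall>i \<le> CARD('n) + 1. mass_assignment TYPE('k) (\<mu> i)) \<and>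
           \<not> (\<exists>L v a b. k_subspace TYPE('k) L \<and> v \<in> L \<and> v \<noteq> 0 \<and> a \<le> b \<and>
                 (\<forall>i \<le> CARD('n) + 1.
                    measure (\<mu> i L) {x \<in> L. a \<le> v \<bullet> x \<and> v \<bullet> x \<le> b} = 1 / 2))"
proof -
  \<comment> \<open>The construction works for every k; the hypothesis only ensures that k-subspaces exist.\<close>
  obtain centre :: "nat \<Rightarrow> real^'n"
    where vertices: "centre ` {..CARD('n)} = insert (- 1) (range (\<lambda>i. axis i 1))"
      and origin: "centre (CARD('n) + 1) = 0"
    by (rule enumerate_simplex_vertices_and_origin)
  define r :: real where "r = 1 / (2 * real CARD('n)^2)"
  define \<mu> where "\<mu> = (\<lambda>j L. distr (uniform_measure lborel (cball (centre j) r)) borel (closest_point L))"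
  have "r > 0"
    by (simp add: r_def)
  have surround: "\<exists>c\<in>centre ` {..CARD('n)}. 2 * r * norm w \<le> w \<bullet> c" for w
    using exists_simplex_vertex_inner_ge[of w] by (simp add: vertices r_def)
  have centres: "centre ` {..CARD('n) + 1} = insert 0 (centre ` {..CARD('n)})"
    by (metis Suc_eq_plus1 atMost_Suc image_insert origin)
  show ?thesis
  proof (intro exI[of _ \<mu>] conjI notI)
    show "\<forall>i \<le> CARD('n) + 1. mass_assignment TYPE('k) (\<mu> i)"
      using \<open>r > 0\<close> by (simp add: \<mu>_def mass_assignment_distr_closest_point
          prob_space_uniform_cball absolutely_continuous_uniform_cball)
    assume "\<exists>L v a b. k_subspace TYPE('k) L \<and> v \<in> L \<and> v \<noteq> 0 \<and> a \<le> b \<and>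
              (\<forall>i \<le> CARD('n) + 1. measure (\<mu> i L) {x \<in> L. a \<le> v \<bullet> x \<and> v \<bullet> x \<le> b} = 1 / 2)"
    then obtain L v a b where L: "subspace L" "v \<in> L"
      and halves: "\<forall>i \<le> CARD('n) + 1. measure (\<mu> i L) {x \<in> L. a \<le> v \<bullet> x \<and> v \<bullet> x \<le> b} = 1 / 2"
      by (auto simp: k_subspace_def)
    have "measure (\<mu> i L) {x \<in> L. a \<le> v \<bullet> x \<and> v \<bullet> x \<le> b}
            = measure (uniform_measure lborel (cball (centre i) r)) {x. a \<le> v \<bullet> x \<and> v \<bullet> x \<le> b}" for i
      unfolding \<mu>_def using L by (intro measure_distr_closest_point_slab) simp_all
    with halves have "\<forall>c \<in> centre ` {..CARD('n) + 1}.
        measure (uniform_measure lborel (cball c r)) {x. a \<le> v \<bullet> x \<and> v \<bullet> x \<le> b} = 1 / 2"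
      by auto
    with not_slab_halves_uniform_cballs[OF \<open>r > 0\<close> surround] show False
      unfolding centres by blast
  qed
qed

end
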